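(* Let $K\ge 2$ and $d\ge K-1$ be integers, let $n_1,\dots,n_K\ge 1$ be integers (arbitrary, possibly very different from one another, i.e. the class sizes may be imbalanced), let $N=\sum_{k=1}^K n_k$, and let $E_H>0$, $E_W>0$. Let $\mathbf{W}^*=[\mathbf{w}_1^*,\dots,\mathbf{w}_K^*]\in\mathbb{R}^{d\times K}$ be a fixed scaled simplex equiangular tight frame, i.e. $\mathbf{W}^*=\sqrt{E_W}\sqrt{\tfrac{K}{K-1}}\,\mathbf{U}\left(\mathbf{I}_K-\tfrac1K\mathbf{1}_K\mathbf{1}_K^T\right)$ for some $\mathbf{U}\in\mathbb{R}^{d\times K}$ with $\mathbf{U}^T\mathbf{U}=\mathbf{I}_K$; equivalently it satisfies ${\mathbf{w}_k^*}^T\mathbf{w}_{k'}^*=E_W\left(\tfrac{K}{K-1}\delta_{k,k'}-\tfrac{1}{K-1}\right)$ for all $k,k'\in\{1,\dots,K\}$. Consider the optimization problem over feature vectors $\mathbf{H}=(\mathbf{h}_{k,i})_{1\le k\le K,\,1\le i\le n_k}$, $\mathbf{h}_{k,i}\in\mathbb{R}^d$: $$\min_{\mathbf{H}}\ \frac1N\sum_{k=1}^K\sum_{i=1}^{n_k}\mathcal{L}_{CE}(\mathbf{h}_{k,i},\mathbf{W}^* )\quad\text{s.t.}\quad \|\mathbf{h}_{k,i}\|^2\le E_H\ \ \forall\, 1\le k\le K,\ 1\le i\le n_k,$$ where for a feature $\mathbf{h}_{k,i}$ of class $k$, $\mathcal{L}_{CE}(\mathbf{h}_{k,i},\mathbf{W}^*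 )=-\log\frac{\exp(\mathbf{h}_{k,i}^T\mathbf{w}_k^* )}{\sum_{j=1}^K\exp(\mathbf{h}_{k,i}^T\mathbf{w}_j^* )}$. Then every global minimizer $\mathbf{H}^*=(\mathbf{h}^*_{k,i})$ of this problem satisfies $${\mathbf{h}^*_{k,i}}^T\mathbf{w}^*_{k'}=\sqrt{E_HE_W}\left(\frac{K}{K-1}\delta_{k,k'}-\frac{1}{K-1}\right)\quad\text{for all } 1\le k,k'\le K,\ 1\le i\le n_k,$$ i.e. the optimal features form a simplex equiangular tight frame with the same directions as $\mathbf{W}^*$ and length $\sqrt{E_H}$, regardless of whether the class sizes $n_k$ are balanced.
   Context: $\delta_{k,k'}$ denotes the Kronecker delta ($1$ if $k=k'$, $0$ otherwise), $\mathbf{I}_K$ is the $K\times K$ identity matrix and $\mathbf{1}_K$ is the all-ones vector in $\mathbb{R}^K$. $\mathbf{h}_{k,i}$ represents the (last-layer) feature of the $i$-th training sample of class $k$; the classifier $\mathbf{W}^*$ is fixed and not optimized. $\|\cdot\|$ is the Euclidean norm. *)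

theory Defs
  imports "HOL-Analysis.Analysis"
begin

text \<open>Classes are indexed by k in {0..<K}; samples of class k by i in {0..<n k}.
  Features and classifier columns live in real^'d, with d = CARD('d).\<close>

definition CE_loss :: "nat \<Rightarrow> (nat \<Rightarrow> real^'d) \<Rightarrow> real^'d \<Rightarrow> nat \<Rightarrow> real" where
  "CE_loss K W h k = - ln (exp (h \<bullet> W k) / (\<Sum>j<K. exp (h \<bullet> W j)))"

definition CE_objective ::
  "nat \<Rightarrow> (nat \<Rightarrow> nat) \<Rightarrow> (nat \<Rightarrow> real^'d) \<Rightarrow> (nat \<Rightarrow> nat \<Rightarrow> real^'d) \<Rightarrow> real" where
  "CE_objective K n W H =
     (1 / real (\<Sum>k<K. n k)) * (\<Sum>k<K. \<Sum>i<n k. CE_loss K W (H k i) k)"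

definition feasible_features ::
  "nat \<Rightarrow> (nat \<Rightarrow> nat) \<Rightarrow> real \<Rightarrow> (nat \<Rightarrow> nat \<Rightarrow> real^'d) \<Rightarrow> bool" where
  "feasible_features K n E_H H \<longleftrightarrow> (\<forall>k<K. \<forall>i<n k. (norm (H k i))\<^sup>2 \<le> E_H)"

definition is_global_minimizer ::
  "nat \<Rightarrow> (nat \<Rightarrow> nat) \<Rightarrow> real \<Rightarrow> (nat \<Rightarrow> real^'d) \<Rightarrow> (nat \<Rightarrow> nat \<Rightarrow> real^'d) \<Rightarrow> bool" where
  "is_global_minimizer K n E_H W H \<longleftrightarrow>
     feasible_features K n E_H H \<and>
     (\<forall>H'. feasible_features K n E_H H' \<longrightarrow> CE_objective K n W H \<le> CE_objective K n W H')"

end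

theory Submission
  imports Defs
begin

text \<open>The columns of \<open>W\<^sup>*\<close> sum to zero, so the logits \<open>h\<^sup>T w\<^sub>j\<close> of any feature sum to zero, and by
  Jensen's inequality for \<open>exp\<close> the CE loss of a class-\<open>k\<close> feature is at least
  \<open>ln (1 + (K - 1) exp (- K t / (K - 1)))\<close>, \<open>t = h\<^sup>T w\<^sub>k\<close>, which is strictly decreasing in \<open>t\<close>.
  On the ball \<open>\<parallel>h\<parallel>\<^sup>2 \<le> E\<^sub>H\<close>, Cauchy-Schwarz gives \<open>t \<le> \<surd>(E\<^sub>H E\<^sub>W)\<close>. Both bounds are attained by
  \<open>h = \<surd>(E\<^sub>H / E\<^sub>W) w\<^sub>k\<close> for every sample simultaneously, so a global minimizer must attain them
  sample by sample, whatever the class sizes; equality in Cauchy-Schwarz then pins down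
  \<open>h\<^sub>k\<^sub>,\<^sub>i = \<surd>(E\<^sub>H / E\<^sub>W) w\<^sub>k\<close>.\<close>

lemma card_mult_exp_mean_le_sum_exp:
  fixes a :: "'a \<Rightarrow> real"
  assumes "finite J" "J \<noteq> {}"
  shows "real (card J) * exp ((\<Sum>j\<in>J. a j) / real (card J)) \<le> (\<Sum>j\<in>J. exp (a j))"
proof -
  define m where "m = real (card J)"
  have m: "m > 0" unfolding m_def using assms by (simp add: card_gt_0_iff)
  have "exp (\<Sum>j\<in>J. (1 / m) *\<^sub>R a j) \<le> (\<Sum>j\<in>J. (1 / m) * exp (a j))"
    using assms m by (intro convex_on_sum[OF _ _ exp_convex]) (auto simp: m_def)
  then have "exp ((\<Sum>j\<in>J. a j) / m) \<le> (\<Sum>j\<in>J. exp (a j)) / m"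
    by (simp add: sum_divide_distrib)
  with m show ?thesis unfolding m_def[symmetric] by (simp add: field_simps)
qed

lemma sqrt_divide_mult_self:
  fixes x y :: real
  assumes "y > 0"
  shows "sqrt (x / y) * y = sqrt (x * y)"
  using assms by (simp add: real_sqrt_divide real_sqrt_mult real_div_sqrt flip: times_divide_eq_right)

lemma inner_eq_bound_imp_scaled:
  fixes h w :: "'a::real_inner"
  assumes "norm h \<le> r" "w \<noteq> 0" "h \<bullet> w = r * norm w"
  shows "h = (r / norm w) *\<^sub>R w"
proof -
  have "r * norm w \<le> norm h * norm w"
    using assms(3) norm_cauchy_schwarz[of h w] by simp
  with assms(1,2) have "norm h = r" by simp
  with assms(3) have "norm h *\<^sub>R w = norm w *\<^sub>R h"
    using norm_cauchy_schwarz_eq by metis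
  then have "h = (1 / norm w) *\<^sub>R (norm h *\<^sub>R w)"
    using assms(2) by simp
  with \<open>norm h = r\<close> show ?thesis by simp
qed

definition simplex_etf_inner :: "nat \<Rightarrow> real \<Rightarrow> nat \<Rightarrow> nat \<Rightarrow> real" where
  "simplex_etf_inner K E k k' =
     E * (real K / (real K - 1) * (if k = k' then 1 else 0) - 1 / (real K - 1))"

definition is_simplex_etf :: "nat \<Rightarrow> real \<Rightarrow> (nat \<Rightarrow> 'a::real_inner) \<Rightarrow> bool" where
  "is_simplex_etf K E W \<longleftrightarrow> (\<forall>k<K. \<forall>k'<K. W k \<bullet> W k' = simplex_etf_inner K E k k')"

lemma simplex_etf_inner_same: "K \<ge> 2 \<Longrightarrow> simplex_etf_inner K E k k = E"
  by (simp add: simplex_etf_inner_def diff_divide_distrib[symmetric])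

lemma simplex_etf_inner_distinct: "k \<noteq> k' \<Longrightarrow> simplex_etf_inner K E k k' = - E / (real K - 1)"
  by (simp add: simplex_etf_inner_def)

lemma mult_simplex_etf_inner: "c * simplex_etf_inner K E k k' = simplex_etf_inner K (c * E) k k'"
  by (simp add: simplex_etf_inner_def)

lemma sum_simplex_etf_inner: "k < K \<Longrightarrow> (\<Sum>j<K. simplex_etf_inner K E j k) = 0"
  by (simp add: simplex_etf_inner_def sum_subtractf sum_distrib_left[symmetric]
      sum_divide_distrib[symmetric])

lemma simplex_etf_sum_eq_0:
  assumes "is_simplex_etf K E W"
  shows "(\<Sum>j<K. W j) = 0"
proof -
  have "(\<Sum>j<K. W j) \<bullet> W k = 0" if "k < K" for k
    using assms that by (simp add: is_simplex_etf_def inner_sum_left sum_simplex_etf_inner)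
  then have "(\<Sum>j<K. W j) \<bullet> (\<Sum>j<K. W j) = 0"
    by (simp add: inner_sum_right)
  then show ?thesis by simp
qed

lemma simplex_etf_norm:
  assumes "K \<ge> 2" "is_simplex_etf K E W" "k < K"
  shows "norm (W k) = sqrt E"
  using assms by (simp add: is_simplex_etf_def norm_eq_sqrt_inner simplex_etf_inner_same)

lemma CE_loss_eq_ln_sum_exp: "CE_loss K W h k = ln (\<Sum>j<K. exp (h \<bullet> W j - h \<bullet> W k))"
proof -
  have "(\<Sum>j<K. exp (h \<bullet> W j - h \<bullet> W k)) = (\<Sum>j<K. exp (h \<bullet> W j)) / exp (h \<bullet> W k)"
    by (simp add: exp_diff sum_divide_distrib)
  then show ?thesis
    unfolding CE_loss_def by (simp add: ln_div ln_inverse[symmetric])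
qed

text \<open>The minimum of the CE loss over zero-sum logit vectors with target logit \<open>t\<close>, attained when
  the other \<open>K - 1\<close> logits are equal.\<close>

definition min_CE_loss :: "nat \<Rightarrow> real \<Rightarrow> real" where
  "min_CE_loss K t = ln (1 + (real K - 1) * exp (- real K * t / (real K - 1)))"

lemma min_CE_loss_le_iff:
  assumes "K \<ge> 2"
  shows "min_CE_loss K t \<le> min_CE_loss K t' \<longleftrightarrow> t' \<le> t"
  using assms by (simp add: min_CE_loss_def add_pos_nonneg divide_le_cancel)

lemma min_CE_loss_le_CE_loss:
  assumes K: "K \<ge> 2" and k: "k < K" and W_sum: "(\<Sum>j<K. W j) = 0"
  shows "min_CE_loss K (h \<bullet> W k) \<le> CE_loss K W h k"
proof -
  define z where "z j = h \<bullet> W j - h \<bullet> W k" for j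
  define J where "J = {..<K} - {k}"
  have card_J: "real (card J) = real K - 1"
    unfolding J_def using K k by (simp add: of_nat_diff)
  have sum_split: "(\<Sum>j<K. f j) = f k + (\<Sum>j\<in>J. f j)" for f :: "nat \<Rightarrow> real"
    unfolding J_def using k by (simp add: sum.remove)
  have "(\<Sum>j<K. h \<bullet> W j) = 0"
    using W_sum by (simp add: inner_sum_right[symmetric])
  then have "(\<Sum>j\<in>J. z j) = - real K * (h \<bullet> W k)"
    using sum_split[of z] by (simp add: z_def sum_subtractf)
  moreover have "J \<noteq> {}"
    using card_J K by (cases "J = {}") auto
  moreover have "finite J"
    by (simp add: J_def)
  ultimately have "(real K - 1) * exp (- real K * (h \<bullet> W k) / (real K - 1)) \<le> (\<Sum>j\<in>J. exp (z j))"
    using card_mult_exp_mean_le_sum_exp[of J z] card_J by simp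
  then have "1 + (real K - 1) * exp (- real K * (h \<bullet> W k) / (real K - 1)) \<le> (\<Sum>j<K. exp (z j))"
    using sum_split[of "\<lambda>j. exp (z j)"] by (simp add: z_def)
  then show ?thesis
    using K unfolding min_CE_loss_def CE_loss_eq_ln_sum_exp z_def
    by (intro ln_mono) (simp_all add: add_pos_nonneg)
qed

lemma CE_loss_scaled_simplex_etf_vertex:
  assumes "K \<ge> 2" "is_simplex_etf K E W" "k < K"
  shows "CE_loss K W (c *\<^sub>R W k) k = min_CE_loss K (c * E)"
proof -
  have "exp (c *\<^sub>R W k \<bullet> W j - c *\<^sub>R W k \<bullet> W k) =
      (if j = k then 1 else exp (- real K * (c * E) / (real K - 1)))" if "j < K" for j
    using assms that
    by (simp add: is_simplex_etf_def simplex_etf_inner_same simplex_etf_inner_distinct field_simps)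
  then have "(\<Sum>j<K. exp (c *\<^sub>R W k \<bullet> W j - c *\<^sub>R W k \<bullet> W k)) =
      1 + (real K - 1) * exp (- real K * (c * E) / (real K - 1))"
    using assms(1,3) by (simp add: sum.If_cases Diff_eq[symmetric] of_nat_diff)
  then show ?thesis
    by (simp add: CE_loss_eq_ln_sum_exp min_CE_loss_def)
qed

lemma CE_loss_ball_min_simplex_etf:
  assumes K: "K \<ge> 2" and etf: "is_simplex_etf K E_W W" and "E_W > 0"
    and "k < K" and h: "(norm h)\<^sup>2 \<le> E_H"
  shows "min_CE_loss K (sqrt (E_H * E_W)) \<le> CE_loss K W h k"
    and "CE_loss K W h k = min_CE_loss K (sqrt (E_H * E_W)) \<Longrightarrow> h = sqrt (E_H / E_W) *\<^sub>R W k"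
proof -
  have W_norm: "norm (W k) = sqrt E_W"
    using simplex_etf_norm[OF K etf \<open>k < K\<close>] .
  have h_norm: "norm h \<le> sqrt E_H"
    using h by (simp add: real_le_rsqrt)
  have "h \<bullet> W k \<le> norm h * norm (W k)"
    by (rule norm_cauchy_schwarz)
  also have "\<dots> \<le> sqrt E_H * sqrt E_W"
    using h_norm unfolding W_norm by (rule mult_right_mono) (simp add: \<open>E_W > 0\<close> less_imp_le)
  finally have margin: "h \<bullet> W k \<le> sqrt (E_H * E_W)"
    by (simp add: real_sqrt_mult)
  have loss: "min_CE_loss K (h \<bullet> W k) \<le> CE_loss K W h k"
    using min_CE_loss_le_CE_loss[OF K \<open>k < K\<close> simplex_etf_sum_eq_0[OF etf]] .
  with margin show "min_CE_loss K (sqrt (E_H * E_W)) \<le> CE_loss K W h k"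
    using min_CE_loss_le_iff[OF K] by (meson order_trans)
  assume "CE_loss K W h k = min_CE_loss K (sqrt (E_H * E_W))"
  with loss have "sqrt (E_H * E_W) \<le> h \<bullet> W k"
    using min_CE_loss_le_iff[OF K] by simp
  with margin have "h \<bullet> W k = sqrt E_H * norm (W k)"
    using W_norm by (simp add: real_sqrt_mult)
  moreover have "W k \<noteq> 0"
    using W_norm \<open>E_W > 0\<close> by auto
  ultimately have "h = (sqrt E_H / norm (W k)) *\<^sub>R W k"
    using inner_eq_bound_imp_scaled[OF h_norm] by simp
  then show "h = sqrt (E_H / E_W) *\<^sub>R W k"
    using W_norm by (simp add: real_sqrt_divide)
qed

lemma global_minimizer_CE_loss_eq_if_pointwise_le:
  assumes opt: "is_global_minimizer K n E_H W H"
    and feas: "feasible_features K n E_H H'"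
    and le: "\<And>k i. k < K \<Longrightarrow> i < n k \<Longrightarrow> CE_loss K W (H' k i) k \<le> CE_loss K W (H k i) k"
    and k: "k < K" and i: "i < n k"
  shows "CE_loss K W (H k i) k = CE_loss K W (H' k i) k"
proof (rule ccontr)
  define S where "S = Sigma {..<K} (\<lambda>k. {..<n k})"
  have total: "(\<Sum>k<K. \<Sum>i<n k. f k i) = (\<Sum>(k, i)\<in>S. f k i)" for f :: "nat \<Rightarrow> nat \<Rightarrow> real"
    unfolding S_def by (simp add: sum.Sigma)
  have "(k, i) \<in> S"
    using k i by (simp add: S_def)
  assume "CE_loss K W (H k i) k \<noteq> CE_loss K W (H' k i) k"
  with le[OF k i] have "CE_loss K W (H' k i) k < CE_loss K W (H k i) k"
    by simp
  with le \<open>(k, i) \<in> S\<close> have "(\<Sum>(k, i)\<in>S. CE_loss K W (H' k i) k) < (\<Sum>(k, i)\<in>S. CE_loss K W (H k i) k)"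
    by (intro sum_strict_mono_ex1) (auto simp: S_def)
  moreover have "0 < (\<Sum>k<K. real (n k))"
    using k i by (intro sum_pos2[of _ k]) auto
  ultimately have "CE_objective K n W H' < CE_objective K n W H"
    unfolding CE_objective_def total by (simp add: divide_strict_right_mono)
  with opt feas show False
    unfolding is_global_minimizer_def by (meson not_le)
qed

lemma global_minimizer_eq_scaled_simplex_etf:
  assumes K: "K \<ge> 2" and etf: "is_simplex_etf K E_W W" and EW: "E_W > 0" and EH: "E_H > 0"
    and opt: "is_global_minimizer K n E_H W H" and k: "k < K" and i: "i < n k"
  shows "H k i = sqrt (E_H / E_W) *\<^sub>R W k"
proof -
  define H' where "H' k i = sqrt (E_H / E_W) *\<^sub>R W k" for k i :: nat
  have feasible: "feasible_features K n E_H H"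
    using opt unfolding is_global_minimizer_def by simp
  have H'_feasible: "feasible_features K n E_H H'"
    using simplex_etf_norm[OF K etf] EW EH
    by (simp add: feasible_features_def H'_def power_mult_distrib)
  have H'_loss: "CE_loss K W (H' k i) k = min_CE_loss K (sqrt (E_H * E_W))" if "k < K" for k i
    using CE_loss_scaled_simplex_etf_vertex[OF K etf that, of "sqrt (E_H / E_W)"]
    unfolding H'_def sqrt_divide_mult_self[OF EW] .
  have H'_le: "CE_loss K W (H' k i) k \<le> CE_loss K W (H k i) k" if "k < K" "i < n k" for k i
    using CE_loss_ball_min_simplex_etf(1)[OF K etf EW that(1)] H'_loss[OF that(1)] feasible that
    unfolding feasible_features_def by simp
  have "CE_loss K W (H k i) k = min_CE_loss K (sqrt (E_H * E_W))"
    using global_minimizer_CE_loss_eq_if_pointwise_le[OF opt H'_feasible H'_le k i] H'_loss[OF k]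
    by simp
  then show ?thesis
    using CE_loss_ball_min_simplex_etf(2)[OF K etf EW k] feasible k i
    unfolding feasible_features_def by simp
qed

theorem theorem1:
  fixes K :: nat and n :: "nat \<Rightarrow> nat" and E_H E_W :: real
    and W :: "nat \<Rightarrow> real^'d" and H :: "nat \<Rightarrow> nat \<Rightarrow> real^'d"
  assumes K2: "K \<ge> 2"
    and dim: "CARD('d) \<ge> K - 1"
    and npos: "\<forall>k<K. n k \<ge> 1"
    and EH: "E_H > 0" and EW: "E_W > 0"
    and W_etf: "\<forall>k<K. \<forall>k'<K.
        W k \<bullet> W k' = E_W * (real K / (real K - 1) * (if k = k' then 1 else 0) - 1 / (real K - 1))"
    and opt: "is_global_minimizer K n E_H W H"
  shows "\<forall>k<K. \<forall>i<n k. \<forall>k'<K.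
        H k i \<bullet> W k' = sqrt (E_H * E_W) * (real K / (real K - 1) * (if k = k' then 1 else 0) - 1 / (real K - 1))"
proof (intro allI impI)
  fix k i k' assume k: "k < K" and i: "i < n k" and k': "k' < K"
  have etf: "is_simplex_etf K E_W W"
    using W_etf unfolding is_simplex_etf_def simplex_etf_inner_def .
  have "H k i \<bullet> W k' = sqrt (E_H / E_W) * simplex_etf_inner K E_W k k'"
    using global_minimizer_eq_scaled_simplex_etf[OF K2 etf EW EH opt k i] etf k k'
    by (simp add: is_simplex_etf_def)
  then show "H k i \<bullet> W k' = sqrt (E_H * E_W) * (real K / (real K - 1) * (if k = k' then 1 else 0) - 1 / (real K - 1))"
    unfolding mult_simplex_etf_inner sqrt_divide_mult_self[OF EW] by (simp only: simplex_etf_inner_def)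
qed

end
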